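(* Let $\mathcal A$ be a well-structured abstract domain with abstraction and concretisation functions $\alpha:\mathcal Q\to\mathcal A$ and $\gamma:\mathcal A\to\mathcal Q$. Then there exist monotone maps $\alpha':\mathcal S(\mathcal H_V)\to\mathcal A$ and $\gamma':\mathcal A\to\mathcal S(\mathcal H_V)$ forming a Galois embedding (with $\mathcal S(\mathcal H_V)$ ordered by inclusion) such that $\alpha=\alpha'\circ\alpha_s$ and $\gamma=\gamma_s\circ\gamma'$.
   Context: Fix a finite set $V$ of quantum variables, each a qubit with state space $\mathcal H_q\cong\mathbb C^2$; $\mathcal H_V=\bigotimes_{q\in V}\mathcal H_q$. $\mathcal D(\mathcal H_V)$ is the set of partial density operators on $\mathcal H_V$ (positive operators of trace at most $1$); $\lceil\rho\rceil$ denotes the support of $\rho$. The concrete domain is $\mathcal Q=2^{\mathcal D(\mathcal H_V)}$ ordered by inclusion. A pair of monotone maps $(\alpha,\gamma)$ between posets is a Galois connection if $c\le\gamma(a)\iff\alpha(c)\le a$, and a Galois embedding if moreover $\alpha\circ\gamma=\mathrm{id}$. A complete lattice $(\mathcal A,\le_{\mathcal A},\vee,\wedge,\bot,\top)$ with monotone $\alpha:\mathcal Q\to\mathcal A$, $\gamma:\mathcal A\to\mathcal Q$ is a well-structured abstract domain if (a) $(\alpha,\gamma)$ is a Galois embedding, and (b) for any family $\rho_i\in\mathcal D(\mathcal H_V)$ and reals $x_i>0$ with $\sum_i x_i\rho_i\in\mathcal D(\mathcal H_V)$, $\alpha(\sum_i x_i\rho_i)=\bigvee_i\alpha(\rho_i)$,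 where $\alpha(\rho)=\alpha(\{\rho\})$. The subspace domain $\mathcal S(\mathcal H_V)$ is the set of all subspaces of $\mathcal H_V$ ordered by inclusion, with join $P\vee Q=\mathrm{span}(P\cup Q)$ and meet $\cap$; its functions are $\gamma_s(P)=\{\rho\in\mathcal D(\mathcal H_V):\lceil\rho\rceil\subseteq P\}$ and $\alpha_s(R)=\bigvee\{\lceil\rho\rceil:\rho\in R\}$. *)

theory Defs
  imports Complex_Main
begin

text \<open>The Hilbert space H_V of the finite set V of qubits is modelled concretely in the
computational basis: basis states are the subsets s of V (s = set of qubits in state 1),
so H_V has dimension 2^|V|.\<close>

type_synonym 'q ket = "'q set \<Rightarrow> complex"
type_synonym 'q op = "'q set \<Rightarrow> 'q set \<Rightarrow> complex"

definition is_ket :: "'q set \<Rightarrow> 'q ket \<Rightarrow> bool" where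
  "is_ket V v \<longleftrightarrow> (\<forall>s. s \<notin> Pow V \<longrightarrow> v s = 0)"

definition is_op :: "'q set \<Rightarrow> 'q op \<Rightarrow> bool" where
  "is_op V A \<longleftrightarrow> (\<forall>s t. s \<notin> Pow V \<or> t \<notin> Pow V \<longrightarrow> A s t = 0)"

definition op_apply :: "'q set \<Rightarrow> 'q op \<Rightarrow> 'q ket \<Rightarrow> 'q ket" where
  "op_apply V A v = (\<lambda>s. \<Sum>t\<in>Pow V. A s t * v t)"

definition inner_H :: "'q set \<Rightarrow> 'q ket \<Rightarrow> 'q ket \<Rightarrow> complex" where
  "inner_H V u v = (\<Sum>s\<in>Pow V. cnj (u s) * v s)"

definition trace_H :: "'q set \<Rightarrow> 'q op \<Rightarrow> complex" where
  "trace_H V A = (\<Sum>s\<in>Pow V. A s s)"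

definition positive_op :: "'q set \<Rightarrow> 'q op \<Rightarrow> bool" where
  "positive_op V A \<longleftrightarrow> is_op V A \<and>
     (\<forall>v. is_ket V v \<longrightarrow> Im (inner_H V v (op_apply V A v)) = 0
                        \<and> Re (inner_H V v (op_apply V A v)) \<ge> 0)"

definition pdo :: "'q set \<Rightarrow> 'q op set" where
  "pdo V = {\<rho>. positive_op V \<rho> \<and> Re (trace_H V \<rho>) \<le> 1}"

text \<open>Support of an operator: its range (for positive operators this equals the
span of eigenvectors with nonzero eigenvalues).\<close>
definition supp :: "'q set \<Rightarrow> 'q op \<Rightarrow> 'q ket set" where
  "supp V A = {op_apply V A v | v. is_ket V v}"

definition subspace_H :: "'q set \<Rightarrow> 'q ket set \<Rightarrow> bool" where
  "subspace_H V S \<longleftrightarrow> S \<subseteq> {v. is_ket V v} \<and> (\<lambda>_. 0) \<in> S \<and>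
     (\<forall>u\<in>S. \<forall>v\<in>S. (\<lambda>s. u s + v s) \<in> S) \<and>
     (\<forall>c. \<forall>v\<in>S. (\<lambda>s. c * v s) \<in> S)"

definition subspaces :: "'q set \<Rightarrow> 'q ket set set" where
  "subspaces V = {S. subspace_H V S}"

definition span_H :: "'q set \<Rightarrow> 'q ket set \<Rightarrow> 'q ket set" where
  "span_H V X = \<Inter> {S. subspace_H V S \<and> X \<subseteq> S}"

definition alpha_s :: "'q set \<Rightarrow> 'q op set \<Rightarrow> 'q ket set" where
  "alpha_s V R = span_H V (\<Union>\<rho>\<in>R. supp V \<rho>)"

definition gamma_s :: "'q set \<Rightarrow> 'q ket set \<Rightarrow> 'q op set" where
  "gamma_s V P = {\<rho> \<in> pdo V. supp V \<rho> \<subseteq> P}"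

definition galois_embedding_on ::
  "'c::order set \<Rightarrow> ('c \<Rightarrow> 'a::order) \<Rightarrow> ('a \<Rightarrow> 'c) \<Rightarrow> bool" where
  "galois_embedding_on C \<alpha> \<gamma> \<longleftrightarrow>
     mono_on C \<alpha> \<and> mono \<gamma> \<and> (\<forall>a. \<gamma> a \<in> C) \<and>
     (\<forall>c\<in>C. \<forall>a. c \<le> \<gamma> a \<longleftrightarrow> \<alpha> c \<le> a) \<and>
     (\<forall>a. \<alpha> (\<gamma> a) = a)"

text \<open>Well-structured abstract domain over the concrete domain Q = 2^{D(H_V)}.
Condition (b) is stated for finite (possibly empty) families.\<close>
definition well_structured ::
  "'q set \<Rightarrow> ('q op set \<Rightarrow> 'a::complete_lattice) \<Rightarrow> ('a \<Rightarrow> 'q op set) \<Rightarrow> bool" where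
  "well_structured V \<alpha> \<gamma> \<longleftrightarrow>
     galois_embedding_on (Pow (pdo V)) \<alpha> \<gamma> \<and>
     (\<forall>(I::nat set) \<rho> x. finite I \<longrightarrow> (\<forall>i\<in>I. \<rho> i \<in> pdo V \<and> x i > (0::real)) \<longrightarrow>
        (\<lambda>s t. \<Sum>i\<in>I. complex_of_real (x i) * \<rho> i s t) \<in> pdo V \<longrightarrow>
        \<alpha> {(\<lambda>s t. \<Sum>i\<in>I. complex_of_real (x i) * \<rho> i s t)} = (SUP i\<in>I. \<alpha> {\<rho> i}))"

end

theory Submission
  imports Defs
begin

text \<open>For every abstract element a, the set \<gamma> a is a face of D(H_V): it contains 0, is closed
under positive combinations that stay in D(H_V), and contains every summand of such a
combination that it contains (both by condition (b)).  Such a face S is determined by the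
subspace P spanned by the supports of its members, namely S = {\<rho> \<in> D(H_V). supp \<rho> \<subseteq> P}:
the kets u whose rank-one operator |u\<rangle>\<langle>u| has a positive multiple in S form a subspace
containing P, and a positive operator supported there splits, by repeatedly
subtracting the rank-one operator of one of its columns, into a positive combination of such
rank-one operators.  Hence \<gamma> = gamma_s \<circ> alpha_s \<circ> \<gamma>, and \<alpha> \<circ> gamma_s, alpha_s \<circ> \<gamma> are the
required maps.\<close>

abbreviation op_plus :: "'q op \<Rightarrow> 'q op \<Rightarrow> 'q op" where
  "op_plus A B \<equiv> \<lambda>s t. A s t + B s t"

abbreviation op_scaleR :: "real \<Rightarrow> 'q op \<Rightarrow> 'q op" where
  "op_scaleR x A \<equiv> \<lambda>s t. complex_of_real x * A s t"

lemma inner_H_add_left: "inner_H V (\<lambda>s. u s + v s) w = inner_H V u w + inner_H V v w"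
  by (simp add: inner_H_def sum.distrib distrib_right)

lemma inner_H_add_right: "inner_H V u (\<lambda>s. v s + w s) = inner_H V u v + inner_H V u w"
  by (simp add: inner_H_def sum.distrib distrib_left)

lemma inner_H_scale_left: "inner_H V (\<lambda>s. c * u s) w = cnj c * inner_H V u w"
  by (simp add: inner_H_def sum_distrib_left mult.assoc)

lemma inner_H_scale_right: "inner_H V u (\<lambda>s. c * v s) = c * inner_H V u v"
  by (simp add: inner_H_def sum_distrib_left algebra_simps)

lemma inner_H_commute: "inner_H V u v = cnj (inner_H V v u)"
  by (simp add: inner_H_def mult.commute)

lemma op_apply_add: "op_apply V A (\<lambda>s. v s + w s) = (\<lambda>s. op_apply V A v s + op_apply V A w s)"
  by (simp add: op_apply_def sum.distrib distrib_left)

lemma op_apply_scale: "op_apply V A (\<lambda>s. c * v s) = (\<lambda>s. c * op_apply V A v s)"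
  by (simp add: op_apply_def sum_distrib_left algebra_simps)

lemma op_apply_op_plus: "op_apply V (op_plus A B) v = (\<lambda>s. op_apply V A v s + op_apply V B v s)"
  by (simp add: op_apply_def sum.distrib distrib_right)

lemma op_apply_op_scale: "op_apply V (\<lambda>s t. c * A s t) v = (\<lambda>s. c * op_apply V A v s)"
  by (simp add: op_apply_def sum_distrib_left algebra_simps)

lemma is_ket_add: "is_ket V u \<Longrightarrow> is_ket V v \<Longrightarrow> is_ket V (\<lambda>s. u s + v s)"
  by (simp add: is_ket_def)

lemma is_ket_scale: "is_ket V u \<Longrightarrow> is_ket V (\<lambda>s. c * u s)"
  by (simp add: is_ket_def)

lemma is_ket_op_apply: "is_op V A \<Longrightarrow> is_ket V (op_apply V A v)"
  by (simp add: is_ket_def is_op_def op_apply_def)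

lemma cnj_mult_self: "cnj z * z = complex_of_real ((cmod z)\<^sup>2)"
  by (simp add: complex_norm_square mult.commute del: of_real_power)

lemma inner_H_self_eq_0:
  assumes "finite V" "is_ket V u" "inner_H V u u = 0"
  shows "u = (\<lambda>_. 0)"
proof
  fix s
  have "(\<Sum>s\<in>Pow V. (cmod (u s))\<^sup>2) = Re (inner_H V u u)"
    by (simp add: inner_H_def Re_sum cnj_mult_self)
  then have "(\<Sum>s\<in>Pow V. (cmod (u s))\<^sup>2) = 0"
    using assms by simp
  then have "\<forall>s\<in>Pow V. (cmod (u s))\<^sup>2 = 0"
    using assms(1) by (subst (asm) sum_nonneg_eq_0_iff) auto
  then show "u s = 0"
    using assms(2) by (cases "s \<in> Pow V") (auto simp: is_ket_def)
qed

section \<open>The sesquilinear form of an operator\<close>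

definition op_form :: "'q set \<Rightarrow> 'q op \<Rightarrow> 'q ket \<Rightarrow> 'q ket \<Rightarrow> complex" where
  "op_form V A v w = inner_H V v (op_apply V A w)"

lemma op_form_add_scale_self:
  "op_form V A (\<lambda>s. v s + c * w s) (\<lambda>s. v s + c * w s) =
     op_form V A v v + c * op_form V A v w + cnj c * op_form V A w v + cnj c * c * op_form V A w w"
  by (simp add: op_form_def op_apply_add op_apply_scale inner_H_add_left inner_H_add_right
      inner_H_scale_left inner_H_scale_right algebra_simps)

lemma op_form_op_plus: "op_form V (op_plus A B) v w = op_form V A v w + op_form V B v w"
  by (simp add: op_form_def op_apply_op_plus inner_H_add_right)

lemma op_form_op_scale: "op_form V (\<lambda>s t. c * A s t) v w = c * op_form V A v w"
  by (simp add: op_form_def op_apply_op_scale inner_H_scale_right)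

lemma positive_opI:
  assumes "is_op V A" "\<And>v. is_ket V v \<Longrightarrow> \<exists>r\<ge>0. op_form V A v v = complex_of_real r"
  shows "positive_op V A"
  unfolding positive_op_def using assms by (fastforce simp: op_form_def)

lemma positive_op_is_op: "positive_op V A \<Longrightarrow> is_op V A"
  by (simp add: positive_op_def)

lemma positive_op_form_self:
  assumes "positive_op V A" "is_ket V v"
  shows "Im (op_form V A v v) = 0" "Re (op_form V A v v) \<ge> 0"
  using assms by (auto simp: positive_op_def op_form_def)

text \<open>Polarisation: the form is real on v + w and on v + i w.\<close>
lemma positive_op_form_hermitian:
  assumes A: "positive_op V A" and v: "is_ket V v" and w: "is_ket V w"
  shows "op_form V A w v = cnj (op_form V A v w)"
proof -
  have "is_ket V (\<lambda>s. v s + c * w s)" for c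
    using v w by (intro is_ket_add is_ket_scale)
  from positive_op_form_self(1)[OF A this] have
    "Im (op_form V A v v + c * op_form V A v w + cnj c * op_form V A w v
           + cnj c * c * op_form V A w w) = 0" for c
    by (simp only: op_form_add_scale_self)
  from this[of 1] this[of \<i>] show ?thesis
    using positive_op_form_self(1)[OF A v] positive_op_form_self(1)[OF A w]
    by (intro complex_eqI) auto
qed

lemma positive_op_form_Cauchy_Schwarz:
  assumes A: "positive_op V A" and v: "is_ket V v" and w: "is_ket V w"
  shows "(cmod (op_form V A w v))\<^sup>2 \<le> Re (op_form V A w w) * Re (op_form V A v v)"
proof -
  define b where "b = op_form V A w v"
  define p where "p = Re (op_form V A w w)"
  define q where "q = Re (op_form V A v v)"
  define n where "n = (cmod b)\<^sup>2"
  have pq: "p \<ge> 0" "q \<ge> 0" "n \<ge> 0"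
    using positive_op_form_self A v w by (auto simp: p_def q_def n_def)
  have real: "op_form V A w w = of_real p" "op_form V A v v = of_real q"
    using positive_op_form_self(1) A v w by (auto simp: p_def q_def complex_eq_iff)
  have herm: "op_form V A v w = cnj b"
    using positive_op_form_hermitian[OF A w v] by (simp add: b_def)
  have bb: "cnj b * b = of_real n"
    by (simp add: n_def cnj_mult_self)
  \<comment> \<open>the form at w + r cnj(b) v is a real quadratic polynomial in r\<close>
  have quadratic: "0 \<le> p + 2 * r * n + r\<^sup>2 * n * q" for r :: real
  proof -
    define c where "c = complex_of_real r * cnj b"
    have "is_ket V (\<lambda>s. w s + c * v s)"
      using v w by (intro is_ket_add is_ket_scale)
    moreover have "op_form V A (\<lambda>s. w s + c * v s) (\<lambda>s. w s + c * v s) =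
        of_real p + c * b + cnj c * cnj b + cnj c * c * of_real q"
      by (simp only: op_form_add_scale_self real herm b_def)
    moreover have "c * b = of_real (r * n)" "cnj c * cnj b = of_real (r * n)"
      "cnj c * c = of_real (r\<^sup>2 * n)"
      unfolding c_def using bb
      by (simp_all add: power2_eq_square mult.assoc mult.commute mult.left_commute)
    ultimately have "op_form V A (\<lambda>s. w s + c * v s) (\<lambda>s. w s + c * v s) =
        of_real (p + 2 * r * n + r\<^sup>2 * n * q)"
      by (simp add: algebra_simps)
    with positive_op_form_self(2)[OF A \<open>is_ket V (\<lambda>s. w s + c * v s)\<close>] show ?thesis
      by simp
  qed
  have "n \<le> p * q"
  proof (cases "n = 0")
    case False
    show ?thesis
    proof (cases "q = 0")
      case True
      from quadratic[of "-(p + 1) / (2 * n)"] True False pq show ?thesis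
        by (simp add: field_simps)
    next
      case False
      with pq have "q > 0" by simp
      with quadratic[of "-1 / q"] show ?thesis
        by (simp add: field_simps power2_eq_square)
    qed
  qed (use pq in simp)
  then show ?thesis
    by (simp add: n_def b_def p_def q_def)
qed

lemma inner_H_op_apply_left:
  assumes "positive_op V A" "is_ket V w" "is_ket V v"
  shows "inner_H V (op_apply V A w) v = op_form V A w v"
  using positive_op_form_hermitian[OF assms(1,3,2)]
  by (subst inner_H_commute) (simp add: op_form_def)

definition basis_ket :: "'q set \<Rightarrow> 'q ket" where
  "basis_ket s = (\<lambda>t. if t = s then 1 else 0)"

lemma is_ket_basis_ket: "s \<in> Pow V \<Longrightarrow> is_ket V (basis_ket s)"
  by (auto simp: is_ket_def basis_ket_def)

lemma op_apply_basis_ket: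
  "finite V \<Longrightarrow> s \<in> Pow V \<Longrightarrow> op_apply V A (basis_ket s) = (\<lambda>r. A r s)"
  by (simp add: op_apply_def basis_ket_def if_distrib cong: if_cong)

lemma inner_H_basis_ket_left:
  assumes "finite V" "s \<in> Pow V"
  shows "inner_H V (basis_ket s) x = x s"
proof -
  have "(\<lambda>r. cnj (basis_ket s r) * x r) = (\<lambda>r. if r = s then x r else 0)"
    by (auto simp: basis_ket_def)
  then show ?thesis
    using assms unfolding inner_H_def by (simp only:) simp
qed

lemma op_form_basis_ket:
  "finite V \<Longrightarrow> s \<in> Pow V \<Longrightarrow> t \<in> Pow V \<Longrightarrow> op_form V A (basis_ket s) (basis_ket t) = A s t"
  by (simp add: op_form_def op_apply_basis_ket inner_H_basis_ket_left)

lemma positive_op_diag: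
  assumes "finite V" "positive_op V A" "s \<in> Pow V"
  shows "Im (A s s) = 0" "Re (A s s) \<ge> 0"
  using positive_op_form_self[OF assms(2) is_ket_basis_ket[OF assms(3)]]
    op_form_basis_ket[OF assms(1,3,3)] by auto

lemma positive_op_entry_bound:
  assumes "finite V" "positive_op V A" "s \<in> Pow V" "t \<in> Pow V"
  shows "(cmod (A s t))\<^sup>2 \<le> Re (A s s) * Re (A t t)"
  using positive_op_form_Cauchy_Schwarz[OF assms(2) is_ket_basis_ket[OF assms(4)]
      is_ket_basis_ket[OF assms(3)]] assms
  by (simp add: op_form_basis_ket)

lemma positive_op_trace_nonneg: "finite V \<Longrightarrow> positive_op V A \<Longrightarrow> Re (trace_H V A) \<ge> 0"
  unfolding trace_H_def Re_sum by (rule sum_nonneg) (rule positive_op_diag(2))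

lemma positive_op_zero: "positive_op V (\<lambda>s t. 0)"
  by (simp add: positive_op_def is_op_def inner_H_def op_apply_def)

lemma zero_in_pdo: "(\<lambda>s t. 0) \<in> pdo V"
  using positive_op_zero by (simp add: pdo_def trace_H_def)

lemma positive_op_plus:
  "positive_op V A \<Longrightarrow> positive_op V B \<Longrightarrow> positive_op V (op_plus A B)"
  unfolding positive_op_def by (auto simp: is_op_def op_form_op_plus[unfolded op_form_def])

lemma positive_op_scaleR:
  "positive_op V A \<Longrightarrow> x \<ge> 0 \<Longrightarrow> positive_op V (op_scaleR x A)"
  unfolding positive_op_def by (auto simp: is_op_def op_form_op_scale[unfolded op_form_def])

lemma trace_H_op_scaleR: "trace_H V (op_scaleR x A) = complex_of_real x * trace_H V A"
  by (simp add: trace_H_def sum_distrib_left)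

lemma op_scaleR_in_pdo:
  assumes "positive_op V A" "x \<ge> 0" "x * Re (trace_H V A) \<le> 1"
  shows "op_scaleR x A \<in> pdo V"
  using assms by (simp add: pdo_def positive_op_scaleR trace_H_op_scaleR)

lemma positive_op_scaled_in_pdo:
  assumes "finite V" "positive_op V A"
  obtains x where "x > 0" "op_scaleR x A \<in> pdo V"
proof -
  define x where "x = 1 / (1 + Re (trace_H V A))"
  have "Re (trace_H V A) \<ge> 0"
    using positive_op_trace_nonneg[OF assms] .
  then have "x > 0" "x * Re (trace_H V A) \<le> 1"
    by (simp_all add: x_def field_simps)
  then show ?thesis
    using that op_scaleR_in_pdo[OF assms(2)] by auto
qed

section \<open>Rank-one operators\<close>

definition outer_op :: "'q ket \<Rightarrow> 'q op" where
  "outer_op u = (\<lambda>s t. u s * cnj (u t))"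

lemma outer_op_zero: "outer_op (\<lambda>_. 0) = (\<lambda>s t. 0)"
  by (simp add: outer_op_def)

lemma op_apply_outer_op: "op_apply V (outer_op u) v = (\<lambda>s. inner_H V u v * u s)"
  unfolding outer_op_def op_apply_def inner_H_def
  by (rule ext) (simp add: sum_distrib_right sum_distrib_left mult.commute mult.left_commute)

lemma op_form_outer_op_self:
  "op_form V (outer_op u) v v = complex_of_real ((cmod (inner_H V u v))\<^sup>2)"
proof -
  have "op_form V (outer_op u) v v = inner_H V u v * inner_H V v u"
    by (simp add: op_form_def op_apply_outer_op inner_H_scale_right)
  also have "\<dots> = cnj (inner_H V u v) * inner_H V u v"
    by (subst inner_H_commute[of V v u]) (simp add: mult.commute)
  finally show ?thesis
    by (simp add: cnj_mult_self)
qed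

lemma positive_op_outer_op:
  assumes "is_ket V u"
  shows "positive_op V (outer_op u)"
proof (rule positive_opI)
  show "is_op V (outer_op u)"
    using assms by (auto simp: is_op_def is_ket_def outer_op_def)
  fix v
  show "\<exists>r\<ge>0. op_form V (outer_op u) v v = complex_of_real r"
    by (intro exI[of _ "(cmod (inner_H V u v))\<^sup>2"]) (simp add: op_form_outer_op_self del: of_real_power)
qed

text \<open>With u = A w, Cauchy-Schwarz gives |\<langle>u|v\<rangle>|^2 \<le> \<langle>w|A|w\<rangle> \<langle>v|A|v\<rangle>, so removing
  |u\<rangle>\<langle>u| / \<langle>w|A|w\<rangle> from A keeps it positive.\<close>
lemma positive_op_minus_outer_op_apply:
  assumes A: "positive_op V A" and w: "is_ket V w" and pos: "Re (op_form V A w w) > 0"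
  shows "positive_op V (op_plus A (op_scaleR (-1 / Re (op_form V A w w)) (outer_op (op_apply V A w))))"
    (is "positive_op V ?A'")
proof (rule positive_opI)
  define p where "p = Re (op_form V A w w)"
  define u where "u = op_apply V A w"
  have u: "is_ket V u"
    unfolding u_def using A by (intro is_ket_op_apply positive_op_is_op)
  show "is_op V ?A'"
    using positive_op_is_op[OF A] positive_op_is_op[OF positive_op_outer_op[OF u]]
    by (simp add: is_op_def u_def)
  fix v assume v: "is_ket V v"
  define q where "q = Re (op_form V A v v)"
  have Av: "op_form V A v v = complex_of_real q"
    using positive_op_form_self(1)[OF A v] by (simp add: q_def complex_eq_iff)
  have "op_form V ?A' v v = op_form V A v v + complex_of_real (-1 / p) * op_form V (outer_op u) v v"
    by (simp only: op_form_op_plus op_form_op_scale p_def u_def)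
  also have "\<dots> = complex_of_real (q - (cmod (op_form V A w v))\<^sup>2 / p)"
    using inner_H_op_apply_left[OF A w v]
    by (simp add: op_form_outer_op_self Av u_def del: of_real_power)
  finally have "op_form V ?A' v v = complex_of_real (q - (cmod (op_form V A w v))\<^sup>2 / p)" .
  moreover have "(cmod (op_form V A w v))\<^sup>2 \<le> p * q"
    using positive_op_form_Cauchy_Schwarz[OF A v w] by (simp add: p_def q_def)
  then have "q - (cmod (op_form V A w v))\<^sup>2 / p \<ge> 0"
    using pos by (simp add: p_def field_simps)
  ultimately show "\<exists>r\<ge>0. op_form V ?A' v v = complex_of_real r"
    by blast
qed

definition diag_support :: "'q set \<Rightarrow> 'q op \<Rightarrow> 'q set set" where
  "diag_support V A = {s \<in> Pow V. A s s \<noteq> 0}"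

lemma finite_diag_support: "finite V \<Longrightarrow> finite (diag_support V A)"
  by (simp add: diag_support_def)

lemma positive_op_eq_0_if_diag_support_empty:
  assumes fin: "finite V" and A: "positive_op V A" and empty: "diag_support V A = {}"
  shows "A = (\<lambda>s t. 0)"
proof (intro ext)
  fix s t
  show "A s t = 0"
  proof (cases "s \<in> Pow V \<and> t \<in> Pow V")
    case True
    then have "A s s = 0" "A t t = 0"
      using empty by (auto simp: diag_support_def)
    then have "(cmod (A s t))\<^sup>2 \<le> 0"
      using positive_op_entry_bound[OF fin A, of s t] True by simp
    then show ?thesis by simp
  next
    case False
    then show ?thesis
      using positive_op_is_op[OF A] by (auto simp: is_op_def)
  qed
qed

text \<open>One step of Gaussian elimination: subtracting the rank-one operator of column s clears
  row and column s.\<close>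
lemma positive_op_eliminate_column:
  assumes fin: "finite V" and A: "positive_op V A" and s: "s \<in> Pow V" and As: "A s s \<noteq> 0"
  defines "A' \<equiv> op_plus A (op_scaleR (-1 / Re (A s s)) (outer_op (\<lambda>r. A r s)))"
  shows "Re (A s s) > 0" and "positive_op V A'"
    and "diag_support V A' \<subseteq> diag_support V A - {s}"
proof -
  define a where "a = Re (A s s)"
  have real: "A s s = complex_of_real a"
    using positive_op_diag[OF fin A s] by (simp add: a_def complex_eq_iff)
  then show pos: "Re (A s s) > 0"
    using positive_op_diag(2)[OF fin A s] As by (cases "a = 0") (auto simp: a_def)
  show "positive_op V A'"
    using positive_op_minus_outer_op_apply[OF A is_ket_basis_ket[OF s]] pos
    by (simp add: A'_def op_form_basis_ket[OF fin s s] op_apply_basis_ket[OF fin s])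
  show "diag_support V A' \<subseteq> diag_support V A - {s}"
  proof
    fix r assume r: "r \<in> diag_support V A'"
    then have rV: "r \<in> Pow V"
      by (simp add: diag_support_def)
    have A'rr: "A' r r = A r r - A r s * cnj (A r s) / complex_of_real (Re (A s s))"
      by (simp add: A'_def outer_op_def)
    have "A r r \<noteq> 0"
    proof
      assume 0: "A r r = 0"
      then have "(cmod (A r s))\<^sup>2 \<le> 0"
        using positive_op_entry_bound[OF fin A rV s] by simp
      then show False
        using r 0 A'rr by (simp add: diag_support_def)
    qed
    moreover have "r \<noteq> s"
    proof
      assume "r = s"
      then have "A' r r = 0"
        using A'rr real pos[folded a_def] by simp
      then show False
        using r by (simp add: diag_support_def)
    qed
    ultimately show "r \<in> diag_support V A - {s}"
      using rV by (simp add: diag_support_def)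
  qed
qed

section \<open>Spans and the subspace domain\<close>

lemma span_H_superset: "X \<subseteq> span_H V X"
  unfolding span_H_def by blast

lemma span_H_mono: "X \<subseteq> Y \<Longrightarrow> span_H V X \<subseteq> span_H V Y"
  unfolding span_H_def by blast

lemma span_H_least: "subspace_H V T \<Longrightarrow> X \<subseteq> T \<Longrightarrow> span_H V X \<subseteq> T"
  unfolding span_H_def by blast

lemma subspace_H_kets: "subspace_H V {v. is_ket V v}"
  unfolding subspace_H_def by (auto simp: is_ket_def)

lemma subspace_H_span_H:
  assumes "X \<subseteq> {v. is_ket V v}"
  shows "subspace_H V (span_H V X)"
proof -
  have "(\<lambda>s. u s + v s) \<in> span_H V X" if "u \<in> span_H V X" "v \<in> span_H V X" for u v
    using that unfolding span_H_def subspace_H_def by blast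
  moreover have "(\<lambda>s. c * v s) \<in> span_H V X" if "v \<in> span_H V X" for c v
    using that unfolding span_H_def subspace_H_def by blast
  moreover have "(\<lambda>_. 0) \<in> span_H V X"
    unfolding span_H_def subspace_H_def by blast
  ultimately show ?thesis
    using span_H_least[OF subspace_H_kets assms] unfolding subspace_H_def by blast
qed

lemma op_apply_in_supp: "is_ket V w \<Longrightarrow> op_apply V A w \<in> supp V A"
  by (auto simp: supp_def)

lemma supp_subset_kets: "positive_op V A \<Longrightarrow> supp V A \<subseteq> {v. is_ket V v}"
  by (auto simp: supp_def intro: is_ket_op_apply positive_op_is_op)

lemma subspace_alpha_s: "R \<subseteq> pdo V \<Longrightarrow> subspace_H V (alpha_s V R)"
  unfolding alpha_s_def by (rule subspace_H_span_H) (use supp_subset_kets in \<open>auto simp: pdo_def\<close>)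

lemma alpha_s_mono: "R \<subseteq> R' \<Longrightarrow> alpha_s V R \<subseteq> alpha_s V R'"
  unfolding alpha_s_def by (rule span_H_mono) auto

lemma gamma_s_mono: "P \<subseteq> Q \<Longrightarrow> gamma_s V P \<subseteq> gamma_s V Q"
  unfolding gamma_s_def by auto

lemma gamma_s_subset_pdo: "gamma_s V P \<subseteq> pdo V"
  by (auto simp: gamma_s_def)

lemma subset_gamma_s_iff:
  assumes "R \<subseteq> pdo V" "subspace_H V P"
  shows "R \<subseteq> gamma_s V P \<longleftrightarrow> alpha_s V R \<subseteq> P"
proof
  assume "R \<subseteq> gamma_s V P"
  then have "(\<Union>\<rho>\<in>R. supp V \<rho>) \<subseteq> P"
    by (auto simp: gamma_s_def)
  then show "alpha_s V R \<subseteq> P"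
    unfolding alpha_s_def by (rule span_H_least[OF assms(2)])
next
  assume "alpha_s V R \<subseteq> P"
  then show "R \<subseteq> gamma_s V P"
    using assms(1) span_H_superset[of "\<Union>\<rho>\<in>R. supp V \<rho>" V]
    unfolding alpha_s_def gamma_s_def by blast
qed

text \<open>Every ket v of P lies in the support of a multiple of |v\<rangle>\<langle>v| that belongs to D(H_V).\<close>
lemma subset_alpha_s_gamma_s:
  assumes fin: "finite V" and P: "subspace_H V P"
  shows "P \<subseteq> alpha_s V (gamma_s V P)"
proof
  fix v assume vP: "v \<in> P"
  have v: "is_ket V v"
    using P vP by (auto simp: subspace_H_def)
  have multiples: "(\<lambda>s. c * v s) \<in> P" for c
    using P vP unfolding subspace_H_def by blast
  obtain y where y: "y > 0" and in_pdo: "op_scaleR y (outer_op v) \<in> pdo V"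
    using positive_op_scaled_in_pdo[OF fin positive_op_outer_op[OF v]] .
  have apply_eq: "op_apply V (op_scaleR y (outer_op v)) w = (\<lambda>s. (y * inner_H V v w) * v s)" for w
    by (simp add: op_apply_op_scale op_apply_outer_op mult.assoc)
  have "supp V (op_scaleR y (outer_op v)) \<subseteq> P"
  proof
    fix x assume "x \<in> supp V (op_scaleR y (outer_op v))"
    then obtain w where "x = op_apply V (op_scaleR y (outer_op v)) w"
      by (auto simp: supp_def)
    then show "x \<in> P"
      using multiples by (simp add: apply_eq)
  qed
  with in_pdo have in_gamma_s: "op_scaleR y (outer_op v) \<in> gamma_s V P"
    by (simp add: gamma_s_def)
  show "v \<in> alpha_s V (gamma_s V P)"
  proof (cases "v = (\<lambda>_. 0)")
    case True
    then show ?thesis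
      using subspace_alpha_s[OF gamma_s_subset_pdo, of V P] by (simp add: subspace_H_def)
  next
    case False
    define n where "n = (\<Sum>s\<in>Pow V. (cmod (v s))\<^sup>2)"
    have vv: "inner_H V v v = complex_of_real n"
      unfolding inner_H_def n_def of_real_sum by (rule sum.cong) (simp_all only: cnj_mult_self)
    then have "n \<noteq> 0"
      using inner_H_self_eq_0[OF fin v] False by auto
    define w where "w = (\<lambda>s. complex_of_real (1 / (y * n)) * v s)"
    have "op_apply V (op_scaleR y (outer_op v)) w =
        (\<lambda>s. (complex_of_real y * (complex_of_real (1 / (y * n)) * complex_of_real n)) * v s)"
      unfolding apply_eq w_def inner_H_scale_right vv by (rule refl)
    also have "complex_of_real y * (complex_of_real (1 / (y * n)) * complex_of_real n) = 1"
      using y \<open>n \<noteq> 0\<close> by (simp add: field_simps)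
    finally have "op_apply V (op_scaleR y (outer_op v)) w = v"
      by simp
    moreover have "is_ket V w"
      unfolding w_def by (rule is_ket_scale[OF v])
    ultimately have "v \<in> supp V (op_scaleR y (outer_op v))"
      using op_apply_in_supp by metis
    then show ?thesis
      using in_gamma_s span_H_superset unfolding alpha_s_def by blast
  qed
qed

section \<open>Faces of the partial density operators\<close>

locale pdo_face =
  fixes V :: "'q set" and S :: "'q op set"
  assumes finite_V: "finite V"
    and face_subset_pdo: "S \<subseteq> pdo V"
    and zero_mem: "(\<lambda>s t. 0) \<in> S"
    and combination_mem: "\<And>\<tau>1 \<tau>2 x1 x2. \<tau>1 \<in> S \<Longrightarrow> \<tau>2 \<in> S \<Longrightarrow> x1 > 0 \<Longrightarrow> x2 > 0 \<Longrightarrow>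
        op_plus (op_scaleR x1 \<tau>1) (op_scaleR x2 \<tau>2) \<in> pdo V \<Longrightarrow>
        op_plus (op_scaleR x1 \<tau>1) (op_scaleR x2 \<tau>2) \<in> S"
    and summand_mem: "\<And>\<tau>1 \<tau>2 x1 x2. \<tau>1 \<in> pdo V \<Longrightarrow> \<tau>2 \<in> pdo V \<Longrightarrow> x1 > 0 \<Longrightarrow> x2 > 0 \<Longrightarrow>
        op_plus (op_scaleR x1 \<tau>1) (op_scaleR x2 \<tau>2) \<in> S \<Longrightarrow> \<tau>1 \<in> S"
begin

lemma mem_of_scaleR_mem: "\<tau> \<in> pdo V \<Longrightarrow> x > 0 \<Longrightarrow> op_scaleR x \<tau> \<in> S \<Longrightarrow> \<tau> \<in> S"
  using summand_mem[of \<tau> "\<lambda>s t. 0" x 1] zero_in_pdo[of V] by simp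

definition cone :: "'q op set" where
  "cone = {\<tau>. positive_op V \<tau> \<and> (\<exists>x>0. op_scaleR x \<tau> \<in> S)}"

lemma zero_in_cone: "(\<lambda>s t. 0) \<in> cone"
  unfolding cone_def using zero_mem positive_op_zero by (auto intro!: exI[of _ 1])

lemma mem_cone_of_mem: "\<tau> \<in> S \<Longrightarrow> \<tau> \<in> cone"
  unfolding cone_def using face_subset_pdo by (auto simp: pdo_def intro!: exI[of _ 1])

lemma mem_of_mem_cone: "\<tau> \<in> cone \<Longrightarrow> \<tau> \<in> pdo V \<Longrightarrow> \<tau> \<in> S"
  unfolding cone_def using mem_of_scaleR_mem by blast

lemma cone_scaleR:
  assumes "\<tau> \<in> cone" "c > 0"
  shows "op_scaleR c \<tau> \<in> cone"
proof -
  obtain x where x: "x > 0" "op_scaleR x \<tau> \<in> S"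
    using assms unfolding cone_def by auto
  have "op_scaleR (x / c) (op_scaleR c \<tau>) = op_scaleR x \<tau>"
    using assms(2) by (simp add: field_simps)
  with x assms show ?thesis
    unfolding cone_def by (auto intro!: positive_op_scaleR exI[of _ "x / c"])
qed

lemma cone_plus:
  assumes "\<tau>1 \<in> cone" "\<tau>2 \<in> cone"
  shows "op_plus \<tau>1 \<tau>2 \<in> cone"
proof -
  obtain x1 where x1: "x1 > 0" "op_scaleR x1 \<tau>1 \<in> S"
    using assms unfolding cone_def by auto
  obtain x2 where x2: "x2 > 0" "op_scaleR x2 \<tau>2 \<in> S"
    using assms unfolding cone_def by auto
  have pos: "positive_op V (op_plus \<tau>1 \<tau>2)"
    using assms unfolding cone_def by (auto intro: positive_op_plus)
  then obtain y where y: "y > 0" "op_scaleR y (op_plus \<tau>1 \<tau>2) \<in> pdo V"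
    using positive_op_scaled_in_pdo[OF finite_V] by blast
  have "op_plus (op_scaleR (y / x1) (op_scaleR x1 \<tau>1)) (op_scaleR (y / x2) (op_scaleR x2 \<tau>2))
      = op_scaleR y (op_plus \<tau>1 \<tau>2)"
    using x1(1) x2(1) by (simp add: field_simps)
  then have "op_scaleR y (op_plus \<tau>1 \<tau>2) \<in> S"
    using combination_mem[OF x1(2) x2(2), of "y / x1" "y / x2"] x1 x2 y by auto
  with pos y show ?thesis
    unfolding cone_def by auto
qed

lemma cone_summand:
  assumes sum: "op_plus \<tau>1 \<tau>2 \<in> cone" and pos: "positive_op V \<tau>1" "positive_op V \<tau>2"
  shows "\<tau>1 \<in> cone"
proof -
  obtain x where x: "x > 0" "op_scaleR x (op_plus \<tau>1 \<tau>2) \<in> S"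
    using sum unfolding cone_def by auto
  obtain y where y: "y > 0" "op_scaleR y (op_plus \<tau>1 \<tau>2) \<in> pdo V"
    using positive_op_scaled_in_pdo[OF finite_V positive_op_plus[OF pos]] by blast
  have traces: "Re (trace_H V \<tau>1) \<ge> 0" "Re (trace_H V \<tau>2) \<ge> 0"
    using positive_op_trace_nonneg[OF finite_V] pos by auto
  have "y * Re (trace_H V (op_plus \<tau>1 \<tau>2)) \<le> 1"
    using y(2) by (simp add: pdo_def trace_H_op_scaleR)
  moreover have "Re (trace_H V (op_plus \<tau>1 \<tau>2)) = Re (trace_H V \<tau>1) + Re (trace_H V \<tau>2)"
    by (simp add: trace_H_def sum.distrib)
  moreover have "0 \<le> y * Re (trace_H V \<tau>1)" "0 \<le> y * Re (trace_H V \<tau>2)"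
    using y(1) traces by simp_all
  ultimately have "y * Re (trace_H V \<tau>1) \<le> 1" "y * Re (trace_H V \<tau>2) \<le> 1"
    by (simp_all add: distrib_left)
  then have in_pdo: "op_scaleR y \<tau>1 \<in> pdo V" "op_scaleR y \<tau>2 \<in> pdo V"
    using op_scaleR_in_pdo[OF pos(1)] op_scaleR_in_pdo[OF pos(2)] y(1) by simp_all
  have "op_plus (op_scaleR (x / y) (op_scaleR y \<tau>1)) (op_scaleR (x / y) (op_scaleR y \<tau>2))
      = op_scaleR x (op_plus \<tau>1 \<tau>2)"
    using y(1) by (simp add: field_simps)
  then have "op_scaleR y \<tau>1 \<in> S"
    using summand_mem[OF in_pdo, of "x / y" "x / y"] x y by auto
  with pos y show ?thesis
    unfolding cone_def by auto
qed

text \<open>If \<langle>w|\<tau>|w\<rangle> = 0 then \<tau> w = 0 by Cauchy-Schwarz; otherwise \<tau> is the sum of the positive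
  operator of positive_op_minus_outer_op_apply and a positive multiple of |\<tau> w\<rangle>\<langle>\<tau> w|.\<close>
lemma outer_op_apply_in_cone:
  assumes \<tau>: "\<tau> \<in> cone" and w: "is_ket V w"
  shows "outer_op (op_apply V \<tau> w) \<in> cone"
proof -
  have pos: "positive_op V \<tau>"
    using \<tau> by (simp add: cone_def)
  define u where "u = op_apply V \<tau> w"
  define p where "p = Re (op_form V \<tau> w w)"
  have u: "is_ket V u"
    unfolding u_def using pos by (intro is_ket_op_apply positive_op_is_op)
  show ?thesis
  proof (cases "p = 0")
    case True
    have "(cmod (op_form V \<tau> w u))\<^sup>2 \<le> 0"
      using positive_op_form_Cauchy_Schwarz[OF pos u w] True by (simp add: p_def)
    then have "inner_H V u u = 0"
      using inner_H_op_apply_left[OF pos w u] by (simp add: u_def)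
    then show ?thesis
      using inner_H_self_eq_0[OF finite_V u] zero_in_cone by (simp add: u_def[symmetric] outer_op_zero)
  next
    case False
    then have p_pos: "p > 0"
      using positive_op_form_self(2)[OF pos w] by (simp add: p_def)
    define \<tau>' where "\<tau>' = op_plus \<tau> (op_scaleR (-1 / p) (outer_op u))"
    have "positive_op V \<tau>'"
      using positive_op_minus_outer_op_apply[OF pos w] p_pos by (simp add: \<tau>'_def p_def u_def)
    moreover have "\<tau> = op_plus (op_scaleR (1 / p) (outer_op u)) \<tau>'"
      by (simp add: \<tau>'_def)
    ultimately have "op_scaleR (1 / p) (outer_op u) \<in> cone"
      using cone_summand[of "op_scaleR (1 / p) (outer_op u)" \<tau>'] \<tau> p_pos
        positive_op_scaleR[OF positive_op_outer_op[OF u], of "1 / p"]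
      by simp
    from cone_scaleR[OF this p_pos] p_pos show ?thesis
      by (simp add: u_def[symmetric])
  qed
qed

definition cone_kets :: "'q ket set" where
  "cone_kets = {u. is_ket V u \<and> outer_op u \<in> cone}"

text \<open>Parallelogram law: |u+v\<rangle>\<langle>u+v| + |u-v\<rangle>\<langle>u-v| = 2 |u\<rangle>\<langle>u| + 2 |v\<rangle>\<langle>v|.\<close>
lemma cone_kets_add:
  assumes "u \<in> cone_kets" "v \<in> cone_kets"
  shows "(\<lambda>s. u s + v s) \<in> cone_kets"
proof -
  have u: "is_ket V u" "outer_op u \<in> cone" and v: "is_ket V v" "outer_op v \<in> cone"
    using assms by (auto simp: cone_kets_def)
  have kets: "is_ket V (\<lambda>s. u s + v s)" "is_ket V (\<lambda>s. u s + (-1) * v s)"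
    using u v by (auto simp: is_ket_def)
  have "op_plus (op_scaleR 2 (outer_op u)) (op_scaleR 2 (outer_op v)) \<in> cone"
    using cone_plus[OF cone_scaleR[OF u(2), of 2] cone_scaleR[OF v(2), of 2]] by simp
  moreover have "op_plus (op_scaleR 2 (outer_op u)) (op_scaleR 2 (outer_op v))
     = op_plus (outer_op (\<lambda>s. u s + v s)) (outer_op (\<lambda>s. u s + (-1) * v s))"
    by (simp add: outer_op_def algebra_simps)
  ultimately have "outer_op (\<lambda>s. u s + v s) \<in> cone"
    using cone_summand[OF _ positive_op_outer_op[OF kets(1)] positive_op_outer_op[OF kets(2)]]
    by simp
  with kets show ?thesis
    by (simp add: cone_kets_def)
qed

lemma cone_kets_scale:
  assumes "v \<in> cone_kets"
  shows "(\<lambda>s. c * v s) \<in> cone_kets"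
proof (cases "c = 0")
  case True
  then show ?thesis
    using zero_in_cone by (simp add: cone_kets_def is_ket_def outer_op_zero)
next
  case False
  have v: "is_ket V v" "outer_op v \<in> cone"
    using assms by (auto simp: cone_kets_def)
  have "outer_op (\<lambda>s. c * v s) = op_scaleR ((cmod c)\<^sup>2) (outer_op v)"
    by (simp add: outer_op_def complex_norm_square del: of_real_power) (simp add: algebra_simps)
  moreover have "op_scaleR ((cmod c)\<^sup>2) (outer_op v) \<in> cone"
    using cone_scaleR[OF v(2), of "(cmod c)\<^sup>2"] False by (simp del: of_real_power)
  ultimately show ?thesis
    using v by (simp add: cone_kets_def is_ket_scale)
qed

lemma subspace_cone_kets: "subspace_H V cone_kets"
  using zero_in_cone cone_kets_add cone_kets_scale
  by (auto simp: subspace_H_def cone_kets_def is_ket_def outer_op_zero)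

lemma supp_subset_cone_kets:
  assumes "\<sigma> \<in> S"
  shows "supp V \<sigma> \<subseteq> cone_kets"
proof
  fix y assume "y \<in> supp V \<sigma>"
  then obtain w where w: "is_ket V w" and y: "y = op_apply V \<sigma> w"
    by (auto simp: supp_def)
  have "positive_op V \<sigma>"
    using assms face_subset_pdo by (auto simp: pdo_def)
  then show "y \<in> cone_kets"
    using outer_op_apply_in_cone[OF mem_cone_of_mem[OF assms] w]
    unfolding cone_kets_def y by (auto intro: is_ket_op_apply positive_op_is_op)
qed

lemma supp_minus_outer_op_subset_cone_kets:
  assumes "supp V \<rho> \<subseteq> cone_kets" "u \<in> cone_kets"
  shows "supp V (op_plus \<rho> (op_scaleR x (outer_op u))) \<subseteq> cone_kets"
proof
  fix y assume "y \<in> supp V (op_plus \<rho> (op_scaleR x (outer_op u)))"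
  then obtain v where v: "is_ket V v" and y: "y = op_apply V (op_plus \<rho> (op_scaleR x (outer_op u))) v"
    by (auto simp: supp_def)
  have "y = (\<lambda>r. op_apply V \<rho> v r + (complex_of_real x * inner_H V u v) * u r)"
    unfolding y op_apply_op_plus op_apply_op_scale op_apply_outer_op by (simp add: mult.assoc)
  moreover have "op_apply V \<rho> v \<in> cone_kets"
    using assms(1) op_apply_in_supp[OF v] by blast
  ultimately show "y \<in> cone_kets"
    using cone_kets_add cone_kets_scale assms(2) by simp
qed

lemma mem_cone_if_supp_subset_cone_kets:
  assumes "positive_op V \<rho>" "supp V \<rho> \<subseteq> cone_kets"
  shows "\<rho> \<in> cone"
  using assms
proof (induction "card (diag_support V \<rho>)" arbitrary: \<rho> rule: less_induct)
  case less
  show ?case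
  proof (cases "diag_support V \<rho> = {}")
    case True
    then show ?thesis
      using positive_op_eq_0_if_diag_support_empty[OF finite_V less.prems(1)] zero_in_cone by simp
  next
    case False
    then obtain s where s: "s \<in> diag_support V \<rho>"
      by auto
    then have sV: "s \<in> Pow V" and \<rho>s: "\<rho> s s \<noteq> 0"
      by (auto simp: diag_support_def)
    define u where "u = (\<lambda>r. \<rho> r s)"
    define \<rho>' where "\<rho>' = op_plus \<rho> (op_scaleR (-1 / Re (\<rho> s s)) (outer_op u))"
    note elim = positive_op_eliminate_column[OF finite_V less.prems(1) sV \<rho>s]
    have u: "u \<in> cone_kets"
      using less.prems(2) op_apply_in_supp[OF is_ket_basis_ket[OF sV], of \<rho>]
      by (auto simp: op_apply_basis_ket[OF finite_V sV] u_def)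
    have "diag_support V \<rho>' \<subset> diag_support V \<rho>"
      using elim(3) s unfolding \<rho>'_def u_def by blast
    then have "card (diag_support V \<rho>') < card (diag_support V \<rho>)"
      by (rule psubset_card_mono[OF finite_diag_support[OF finite_V]])
    moreover have "supp V \<rho>' \<subseteq> cone_kets"
      unfolding \<rho>'_def using supp_minus_outer_op_subset_cone_kets[OF less.prems(2) u] .
    moreover have "positive_op V \<rho>'"
      using elim(2) unfolding \<rho>'_def u_def .
    ultimately have "\<rho>' \<in> cone"
      using less.hyps by blast
    moreover have "outer_op u \<in> cone"
      using u by (simp add: cone_kets_def)
    then have "op_scaleR (1 / Re (\<rho> s s)) (outer_op u) \<in> cone"
      by (rule cone_scaleR) (use elim(1) in simp)
    ultimately have "op_plus \<rho>' (op_scaleR (1 / Re (\<rho> s s)) (outer_op u)) \<in> cone"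
      by (rule cone_plus)
    then show ?thesis
      by (simp add: \<rho>'_def)
  qed
qed

theorem gamma_s_alpha_s_eq: "gamma_s V (alpha_s V S) = S"
proof
  show "S \<subseteq> gamma_s V (alpha_s V S)"
    using subset_gamma_s_iff[OF face_subset_pdo subspace_alpha_s[OF face_subset_pdo]] by blast
  have "alpha_s V S \<subseteq> cone_kets"
    unfolding alpha_s_def using supp_subset_cone_kets
    by (intro span_H_least[OF subspace_cone_kets]) blast
  then show "gamma_s V (alpha_s V S) \<subseteq> S"
    using mem_cone_if_supp_subset_cone_kets mem_of_mem_cone
    by (auto simp: gamma_s_def pdo_def)
qed

end

section \<open>Factoring a well-structured domain through the subspace domain\<close>

lemma galois_embedding_on_factor:
  fixes \<alpha> :: "'c::order \<Rightarrow> 'a::order" and \<gamma> :: "'a \<Rightarrow> 'c"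
    and \<alpha>\<^sub>s :: "'c \<Rightarrow> 'd::order" and \<gamma>\<^sub>s :: "'d \<Rightarrow> 'c"
  assumes ge: "galois_embedding_on C \<alpha> \<gamma>"
    and connection: "\<And>c P. c \<in> C \<Longrightarrow> P \<in> D \<Longrightarrow> c \<le> \<gamma>\<^sub>s P \<longleftrightarrow> \<alpha>\<^sub>s c \<le> P"
    and unit: "\<And>P. P \<in> D \<Longrightarrow> P \<le> \<alpha>\<^sub>s (\<gamma>\<^sub>s P)"
    and \<alpha>\<^sub>s_mono: "mono_on C \<alpha>\<^sub>s" and \<alpha>\<^sub>s_into: "\<And>c. c \<in> C \<Longrightarrow> \<alpha>\<^sub>s c \<in> D"
    and \<gamma>\<^sub>s_mono: "mono \<gamma>\<^sub>s" and \<gamma>\<^sub>s_into: "\<And>P. \<gamma>\<^sub>s P \<in> C"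
    and closed: "\<And>a. \<gamma>\<^sub>s (\<alpha>\<^sub>s (\<gamma> a)) = \<gamma> a"
  shows "galois_embedding_on D (\<alpha> \<circ> \<gamma>\<^sub>s) (\<alpha>\<^sub>s \<circ> \<gamma>)"
    and "\<And>c. c \<in> C \<Longrightarrow> \<alpha> c = \<alpha> (\<gamma>\<^sub>s (\<alpha>\<^sub>s c))"
proof -
  have \<alpha>_mono: "mono_on C \<alpha>" and \<gamma>_mono: "mono \<gamma>" and \<gamma>_into: "\<And>a. \<gamma> a \<in> C"
    and galois: "\<And>c a. c \<in> C \<Longrightarrow> c \<le> \<gamma> a \<longleftrightarrow> \<alpha> c \<le> a" and embedding: "\<And>a. \<alpha> (\<gamma> a) = a"
    using ge unfolding galois_embedding_on_def by auto
  have factor_galois: "P \<le> \<alpha>\<^sub>s (\<gamma> a) \<longleftrightarrow> \<alpha> (\<gamma>\<^sub>s P) \<le> a" if P: "P \<in> D" for P a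
  proof
    assume "P \<le> \<alpha>\<^sub>s (\<gamma> a)"
    then have "\<gamma>\<^sub>s P \<le> \<gamma> a"
      using monoD[OF \<gamma>\<^sub>s_mono] closed by metis
    then show "\<alpha> (\<gamma>\<^sub>s P) \<le> a"
      using galois \<gamma>\<^sub>s_into by blast
  next
    assume "\<alpha> (\<gamma>\<^sub>s P) \<le> a"
    then have "\<gamma>\<^sub>s P \<le> \<gamma> a"
      using galois \<gamma>\<^sub>s_into by blast
    then have "\<alpha>\<^sub>s (\<gamma>\<^sub>s P) \<le> \<alpha>\<^sub>s (\<gamma> a)"
      using mono_onD[OF \<alpha>\<^sub>s_mono] \<gamma>\<^sub>s_into \<gamma>_into by blast
    then show "P \<le> \<alpha>\<^sub>s (\<gamma> a)"
      by (rule order_trans[OF unit[OF P]])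
  qed
  show "galois_embedding_on D (\<alpha> \<circ> \<gamma>\<^sub>s) (\<alpha>\<^sub>s \<circ> \<gamma>)"
    unfolding galois_embedding_on_def comp_def
  proof (intro conjI ballI allI)
    show "mono_on D (\<lambda>P. \<alpha> (\<gamma>\<^sub>s P))"
      by (rule mono_onI) (use mono_onD[OF \<alpha>_mono] monoD[OF \<gamma>\<^sub>s_mono] \<gamma>\<^sub>s_into in blast)
    show "mono (\<lambda>a. \<alpha>\<^sub>s (\<gamma> a))"
      by (rule monoI) (use mono_onD[OF \<alpha>\<^sub>s_mono] monoD[OF \<gamma>_mono] \<gamma>_into in blast)
    show "\<alpha> (\<gamma>\<^sub>s (\<alpha>\<^sub>s (\<gamma> a))) = a" for a
      by (simp add: closed embedding)
  qed (use \<alpha>\<^sub>s_into \<gamma>_into factor_galois in auto)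
  show "\<alpha> c = \<alpha> (\<gamma>\<^sub>s (\<alpha>\<^sub>s c))" if c: "c \<in> C" for c
  proof (rule antisym)
    show "\<alpha> c \<le> \<alpha> (\<gamma>\<^sub>s (\<alpha>\<^sub>s c))"
      using mono_onD[OF \<alpha>_mono c \<gamma>\<^sub>s_into] connection[OF c \<alpha>\<^sub>s_into[OF c]] by blast
    have "c \<le> \<gamma> (\<alpha> c)"
      using galois[OF c] by blast
    then have "\<alpha>\<^sub>s c \<le> \<alpha>\<^sub>s (\<gamma> (\<alpha> c))"
      using mono_onD[OF \<alpha>\<^sub>s_mono c \<gamma>_into] by blast
    then show "\<alpha> (\<gamma>\<^sub>s (\<alpha>\<^sub>s c)) \<le> \<alpha> c"
      using factor_galois[OF \<alpha>\<^sub>s_into[OF c]] by blast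
  qed
qed

lemma well_structured_alpha_sum:
  fixes I :: "nat set"
  assumes "well_structured V \<alpha> \<gamma>" "finite I" "\<forall>i\<in>I. \<rho> i \<in> pdo V \<and> x i > 0"
    "(\<lambda>s t. \<Sum>i\<in>I. complex_of_real (x i) * \<rho> i s t) \<in> pdo V"
  shows "\<alpha> {\<lambda>s t. \<Sum>i\<in>I. complex_of_real (x i) * \<rho> i s t} = (SUP i\<in>I. \<alpha> {\<rho> i})"
  using conjunct2[OF assms(1)[unfolded well_structured_def]] assms(2-4) by simp

lemma well_structured_alpha_zero:
  assumes "well_structured V \<alpha> \<gamma>"
  shows "\<alpha> {\<lambda>s t. 0} = bot"
  using well_structured_alpha_sum[OF assms, of "{}" "\<lambda>_ s t. 0" "\<lambda>_. 1"] zero_in_pdo[of V] by simp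

lemma well_structured_alpha_combination:
  assumes "well_structured V \<alpha> \<gamma>" "\<tau>1 \<in> pdo V" "\<tau>2 \<in> pdo V" "x1 > 0" "x2 > 0"
    "op_plus (op_scaleR x1 \<tau>1) (op_scaleR x2 \<tau>2) \<in> pdo V"
  shows "\<alpha> {op_plus (op_scaleR x1 \<tau>1) (op_scaleR x2 \<tau>2)} = sup (\<alpha> {\<tau>1}) (\<alpha> {\<tau>2})"
  using well_structured_alpha_sum[OF assms(1), of "{0::nat, 1}"
      "\<lambda>i. if i = 0 then \<tau>1 else \<tau>2" "\<lambda>i. if i = 0 then x1 else x2"] assms(2-6)
  by simp

lemma well_structured_pdo_face:
  fixes V :: "'q set"
  assumes fin: "finite V" and ws: "well_structured V \<alpha> \<gamma>"
  shows "pdo_face V (\<gamma> a)"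
proof -
  have galois: "\<And>c a. c \<in> Pow (pdo V) \<Longrightarrow> c \<subseteq> \<gamma> a \<longleftrightarrow> \<alpha> c \<le> a"
    and into: "\<And>a. \<gamma> a \<in> Pow (pdo V)"
    using ws unfolding well_structured_def galois_embedding_on_def by auto
  have mem: "\<rho> \<in> \<gamma> a \<longleftrightarrow> \<rho> \<in> pdo V \<and> \<alpha> {\<rho>} \<le> a" for \<rho>
    using galois[of "{\<rho>}" a] into[of a] by auto
  show ?thesis
  proof
    show "\<gamma> a \<subseteq> pdo V"
      using into by blast
    show "(\<lambda>s t. 0) \<in> \<gamma> a"
      using mem zero_in_pdo[of V] well_structured_alpha_zero[OF ws] by simp
  next
    fix \<tau>1 \<tau>2 :: "'q op" and x1 x2 :: real
    assume \<tau>: "\<tau>1 \<in> \<gamma> a" "\<tau>2 \<in> \<gamma> a" and x: "x1 > 0" "x2 > 0"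
      and comb: "op_plus (op_scaleR x1 \<tau>1) (op_scaleR x2 \<tau>2) \<in> pdo V"
    have "\<alpha> {op_plus (op_scaleR x1 \<tau>1) (op_scaleR x2 \<tau>2)} = sup (\<alpha> {\<tau>1}) (\<alpha> {\<tau>2})"
      using well_structured_alpha_combination[OF ws _ _ x comb] \<tau> mem by blast
    also have "\<dots> \<le> a"
      using \<tau> mem by simp
    finally show "op_plus (op_scaleR x1 \<tau>1) (op_scaleR x2 \<tau>2) \<in> \<gamma> a"
      using comb mem by blast
  next
    fix \<tau>1 \<tau>2 :: "'q op" and x1 x2 :: real
    assume \<tau>: "\<tau>1 \<in> pdo V" "\<tau>2 \<in> pdo V" and x: "x1 > 0" "x2 > 0"
      and comb: "op_plus (op_scaleR x1 \<tau>1) (op_scaleR x2 \<tau>2) \<in> \<gamma> a"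
    have comb_pdo: "op_plus (op_scaleR x1 \<tau>1) (op_scaleR x2 \<tau>2) \<in> pdo V"
      using comb mem by blast
    have "\<alpha> {\<tau>1} \<le> sup (\<alpha> {\<tau>1}) (\<alpha> {\<tau>2})"
      by simp
    also have "\<dots> = \<alpha> {op_plus (op_scaleR x1 \<tau>1) (op_scaleR x2 \<tau>2)}"
      using well_structured_alpha_combination[OF ws \<tau> x comb_pdo] by simp
    also have "\<dots> \<le> a"
      using comb mem by blast
    finally show "\<tau>1 \<in> \<gamma> a"
      using \<tau> mem by blast
  qed (rule fin)
qed

theorem mainTheorem3:
  fixes V :: "'q set"
    and \<alpha> :: "'q op set \<Rightarrow> 'a::complete_lattice"
    and \<gamma> :: "'a \<Rightarrow> 'q op set"
  assumes "finite V"
    and "well_structured V \<alpha> \<gamma>"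
  shows "\<exists>(\<alpha>' :: 'q ket set \<Rightarrow> 'a) (\<gamma>' :: 'a \<Rightarrow> 'q ket set).
           galois_embedding_on (subspaces V) \<alpha>' \<gamma>' \<and>
           (\<forall>R. R \<subseteq> pdo V \<longrightarrow> \<alpha> R = \<alpha>' (alpha_s V R)) \<and>
           (\<forall>a. \<gamma> a = gamma_s V (\<gamma>' a))"
proof -
  have closed: "gamma_s V (alpha_s V (\<gamma> a)) = \<gamma> a" for a
    using pdo_face.gamma_s_alpha_s_eq[OF well_structured_pdo_face[OF assms]] .
  have "mono_on (Pow (pdo V)) (alpha_s V)" "mono (gamma_s V)"
    by (auto intro!: mono_onI monoI alpha_s_mono gamma_s_mono)
  note factor = galois_embedding_on_factor[of "Pow (pdo V)" \<alpha> \<gamma> "subspaces V" "gamma_s V" "alpha_s V",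
      OF _ _ _ this(1) _ this(2) _ closed]
  have "galois_embedding_on (Pow (pdo V)) \<alpha> \<gamma>"
    using assms(2) by (simp add: well_structured_def)
  then have "galois_embedding_on (subspaces V) (\<alpha> \<circ> gamma_s V) (alpha_s V \<circ> \<gamma>)"
    and "\<And>R. R \<in> Pow (pdo V) \<Longrightarrow> \<alpha> R = \<alpha> (gamma_s V (alpha_s V R))"
    by (rule factor; auto simp: subspaces_def subset_gamma_s_iff subset_alpha_s_gamma_s[OF assms(1)]
        subspace_alpha_s gamma_s_subset_pdo)+
  with closed show ?thesis
    by (intro exI[of _ "\<alpha> \<circ> gamma_s V"] exI[of _ "alpha_s V \<circ> \<gamma>"]) auto
qed

end
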